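(* Let $n\geqslant 3$ and let $\alpha_1<\alpha_2<\cdots<\alpha_n$ be real numbers. Let $D$ be the $n\times n$ matrix with $D_{ij}=(\alpha_i-\alpha_j)^2$, and let $D'$ be obtained from $D$ by dividing every entry $D_{ij}$ by the sum $d_j$ of the entries of the $j$th column of $D$. For $k\in\mathbb{Z}/n\mathbb{Z}$ let $u_k\in\mathbb{R}^n$ have $i$th coordinate $(\alpha_i-\alpha_k)(\alpha_i-\alpha_{k+1})$, and let $s_k$ be the sum of the coordinates of $u_k$. Then $\operatorname{rank}(D)=3$, each $u_k$ lies in $\operatorname{col}(D)$, and the polytope $\mathcal{P}_{out}(D')$ is an $n$-gon whose vertices are exactly $v_k=s_k^{-1}u_k$, $k=1,\ldots,n$.
   Context: Indices are taken in $\mathbb{Z}/n\mathbb{Z}$, so that $\alpha_{n+1}=\alpha_1$. $\operatorname{col}(A)$ is the linear span of the columns of $A$; $\Delta_n=\{x\in\mathbb{R}^n: x_1+\cdots+x_n=1,\ x_i\geqslant0\}$; $\mathcal{P}_{out}(A)=\Delta_n\cap\operatorname{col}(A)$. *)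

theory Defs
  imports "HOL-Analysis.Analysis"
begin

definition col :: "real^'n^'m \<Rightarrow> (real^'m) set" where
  "col A = span (columns A)"

definition std_simplex :: "(real^'n) set" where
  "std_simplex = {x. (\<Sum>i\<in>UNIV. x $ i) = 1 \<and> (\<forall>i. 0 \<le> x $ i)}"

definition P_out :: "real^'n^'n \<Rightarrow> (real^'n) set" where
  "P_out A = std_simplex \<inter> col A"

definition is_polygon_with_vertices :: "('a::euclidean_space) set \<Rightarrow> 'a set \<Rightarrow> bool" where
  "is_polygon_with_vertices P V \<longleftrightarrow>
     polytope P \<and> aff_dim P = 2 \<and> {v. v extreme_point_of P} = V"


text \<open>The squared-distance matrix D, its column-normalised version D',
  and the vectors u_k, v_k (indices k in {0..<n}, taken cyclically mod n).\<close>
definition sqdist_mat :: "('n::finite \<Rightarrow> real) \<Rightarrow> real^'n^'n" where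
  "sqdist_mat a = (\<chi> i j. (a i - a j)^2)"

definition col_normalize :: "real^'n^'n \<Rightarrow> real^'n^'n" where
  "col_normalize A = (\<chi> i j. A $ i $ j / (\<Sum>r\<in>UNIV. A $ r $ j))"

definition u_vec :: "('n::finite \<Rightarrow> real) \<Rightarrow> (nat \<Rightarrow> 'n) \<Rightarrow> nat \<Rightarrow> real^'n" where
  "u_vec a e k = (\<chi> i. (a i - a (e k)) * (a i - a (e ((k + 1) mod CARD('n)))))"

definition v_vec :: "('n::finite \<Rightarrow> real) \<Rightarrow> (nat \<Rightarrow> 'n) \<Rightarrow> nat \<Rightarrow> real^'n" where
  "v_vec a e k = (1 / (\<Sum>i\<in>UNIV. u_vec a e k $ i)) *\<^sub>R u_vec a e k"

end

theory Submission
  imports Defs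
begin

text \<open>The columns \<open>(\<alpha>\<^sub>i - \<alpha>\<^sub>j)\<^sup>2\<close> of \<open>D\<close> are quadratic polynomials evaluated at the nodes,
  so \<open>col(D) = col(D')\<close> is the space \<open>Q\<close> of such evaluations, which is 3-dimensional because there
  are at least three distinct nodes. \<open>P_out(D') = \<Delta>\<^sub>n \<inter> Q\<close> is then a polytope of dimension
  \<open>dim Q - 1 = 2\<close>. A point of \<open>\<Delta>\<^sub>n \<inter> Q\<close> with at most one zero coordinate is not a vertex, since
  some nonzero \<open>w \<in> Q\<close> with coordinate sum 0 vanishes there and one can move along \<open>\<plusminus>w\<close>.
  A point with zeros at \<open>p \<noteq> q\<close> is a multiple of \<open>(\<alpha> - \<alpha>\<^sub>p)(\<alpha> - \<alpha>\<^sub>q)\<close>; this vector has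
  constant sign exactly when no node lies strictly between \<open>\<alpha>\<^sub>p\<close> and \<open>\<alpha>\<^sub>q\<close> or no node lies outside,
  i.e. when \<open>p, q\<close> are cyclically consecutive, and the point is then \<open>v\<^sub>k\<close>.\<close>

section \<open>Sections of the standard simplex by a subspace\<close>

definition sign_definite :: "real^'n \<Rightarrow> bool" where
  "sign_definite x \<longleftrightarrow> (\<forall>i. 0 \<le> x $ i) \<or> (\<forall>i. x $ i \<le> 0)"

lemma std_simplex_eq_Int_halfspaces:
  "std_simplex = {x. (\<chi> i. 1) \<bullet> x = 1} \<inter> (\<Inter>i. {x::real^'n. axis i 1 \<bullet> x \<ge> 0})"
  by (auto simp: std_simplex_def inner_axis' inner_vec_def[of "\<chi> i. 1"])

lemma bounded_std_simplex: "bounded (std_simplex :: (real^'n) set)"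
  unfolding bounded_iff
proof (intro exI ballI)
  fix x :: "real^'n" assume "x \<in> std_simplex"
  hence "(\<Sum>i\<in>UNIV. \<bar>x $ i\<bar>) = 1" by (simp add: std_simplex_def)
  thus "norm x \<le> 1" using norm_le_l1_cart[of x] by simp
qed

lemma polytope_std_simplex_Int_subspace:
  fixes S :: "(real^'n) set"
  assumes "subspace S"
  shows "polytope (std_simplex \<inter> S)"
proof -
  have "polyhedron (std_simplex :: (real^'n) set)"
    unfolding std_simplex_eq_Int_halfspaces
    by (intro polyhedron_Int polyhedron_hyperplane polyhedron_Inter) (auto simp: polyhedron_halfspace_ge)
  moreover have "polyhedron S" using assms by (simp add: affine_imp_polyhedron subspace_imp_affine)
  ultimately show ?thesis
    by (simp add: polytope_eq_bounded_polyhedron bounded_Int bounded_std_simplex)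
qed

lemma aff_dim_std_simplex_Int_subspace:
  fixes S :: "(real^'n) set"
  assumes S: "subspace S" and one: "(\<chi> i. 1) \<in> S"
  shows "aff_dim (std_simplex \<inter> S) = int (dim S) - 1"
proof -
  define H where "H = S \<inter> {x. (\<chi> i. 1) \<bullet> x = 1}"
  define c where "c = (1 / real CARD('n)) *\<^sub>R (\<chi> i. 1 :: real^'n)"
  have cH: "c \<in> H"
    using subspace_mul[OF S one] by (simp add: H_def c_def inner_vec_def)
  have "\<not> S \<subseteq> {x. (\<chi> i. 1) \<bullet> x = 1}" using subspace_0[OF S] by auto
  hence aff_dim_H: "aff_dim H = int (dim S) - 1"
    using cH aff_dim_affine_Int_hyperplane[OF subspace_imp_affine[OF S], of "\<chi> i. 1" 1]
    unfolding H_def aff_dim_subspace[OF S] by (metis empty_iff)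
  have "std_simplex \<inter> S \<subseteq> H" by (auto simp: H_def std_simplex_eq_Int_halfspaces)
  hence upper: "aff_dim (std_simplex \<inter> S) \<le> aff_dim H" by (rule aff_dim_subset)
  define T where "T = (\<Inter>i. {x::real^'n. axis i 1 \<bullet> x > 0})"
  have "open T" unfolding T_def by (intro open_INT) (auto intro: open_halfspace_gt)
  moreover have "c \<in> H \<inter> T" using cH by (simp add: T_def c_def inner_axis')
  moreover have "convex H"
    unfolding H_def by (intro convex_Int subspace_imp_convex[OF S] convex_hyperplane)
  ultimately have "aff_dim (H \<inter> T) = aff_dim H"
    using aff_dim_convex_Int_open[of H T] by blast
  moreover have "H \<inter> T \<subseteq> std_simplex \<inter> S"
    by (auto simp: H_def T_def std_simplex_eq_Int_halfspaces less_imp_le)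
  hence "aff_dim (H \<inter> T) \<le> aff_dim (std_simplex \<inter> S)" by (rule aff_dim_subset)
  ultimately show ?thesis using upper aff_dim_H by linarith
qed

lemma std_simplex_zero_on_open_segment:
  assumes "y \<in> std_simplex" "z \<in> std_simplex" "x \<in> open_segment y z" "x $ i = 0"
  shows "y $ i = 0 \<and> z $ i = 0"
proof -
  obtain t where t: "0 < t" "t < 1" "x = (1 - t) *\<^sub>R y + t *\<^sub>R z"
    using assms(3) by (auto simp: in_segment)
  have "0 \<le> y $ i" "0 \<le> z $ i" using assms(1,2) by (auto simp: std_simplex_def)
  moreover have "(1 - t) * y $ i + t * z $ i = 0" using t(3) assms(4) by simp
  ultimately show ?thesis using t(1,2)
    by (smt (verit) mult_nonneg_nonneg mult_pos_pos)
qed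

lemma extreme_point_of_std_simplex_Int_if_unique:
  assumes x: "x \<in> std_simplex \<inter> S"
    and unique: "\<And>y. y \<in> std_simplex \<inter> S \<Longrightarrow> (\<And>i. x $ i = 0 \<Longrightarrow> y $ i = 0) \<Longrightarrow> y = x"
  shows "x extreme_point_of (std_simplex \<inter> S)"
  unfolding extreme_point_of_def
proof (intro conjI ballI notI x)
  fix y z assume y: "y \<in> std_simplex \<inter> S" and z: "z \<in> std_simplex \<inter> S"
    and x_yz: "x \<in> open_segment y z"
  have "y = x" "z = x"
    using y z std_simplex_zero_on_open_segment[OF _ _ x_yz] by (auto intro!: unique)
  thus False using x_yz by (simp add: open_segment_def)
qed

lemma not_extreme_point_of_std_simplex_Int:
  assumes S: "subspace S" and x: "x \<in> std_simplex \<inter> S"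
    and w: "w \<in> S" "(\<Sum>i\<in>UNIV. w $ i) = 0" "w \<noteq> 0"
    and supp: "\<And>i. x $ i = 0 \<Longrightarrow> w $ i = 0"
  shows "\<not> x extreme_point_of (std_simplex \<inter> S)"
proof
  assume ext: "x extreme_point_of (std_simplex \<inter> S)"
  have "\<forall>\<^sub>F t in at 0. 0 \<le> x $ i + t * w $ i" for i
  proof (cases "x $ i = 0")
    case False
    hence "0 < x $ i" using x by (auto simp: std_simplex_def order.order_iff_strict)
    moreover have "((\<lambda>t. x $ i + t * w $ i) \<longlongrightarrow> x $ i) (at 0)"
      by (auto intro!: tendsto_eq_intros)
    ultimately show ?thesis by (auto dest: order_tendstoD(1) elim!: eventually_mono)
  qed (simp add: supp)
  hence "\<forall>\<^sub>F t in at 0. \<forall>i. 0 \<le> x $ i + t * w $ i" by (rule eventually_all_finite)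
  then obtain d :: real where d: "0 < d" "\<And>t. t \<noteq> 0 \<Longrightarrow> \<bar>t\<bar> < d \<Longrightarrow> \<forall>i. 0 \<le> x $ i + t * w $ i"
    by (auto simp: eventually_at dist_real_def)
  define y where "y = x + (d/2) *\<^sub>R w"
  define z where "z = x - (d/2) *\<^sub>R w"
  have "0 \<le> x $ i + (d/2) * w $ i" "0 \<le> x $ i + (- (d/2)) * w $ i" for i
    using d(2)[of "d/2"] d(2)[of "- (d/2)"] d(1) by auto
  moreover have "(\<Sum>i\<in>UNIV. (d/2) * w $ i) = 0"
    using w(2) by (simp add: sum_distrib_left[of "d/2", symmetric] del: times_divide_eq_left)
  ultimately have "y \<in> std_simplex \<inter> S" "z \<in> std_simplex \<inter> S"
    using x w by (auto simp: y_def z_def std_simplex_def sum.distrib sum_subtractf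
        intro!: subspace_add[OF S] subspace_diff[OF S] subspace_mul[OF S])
  moreover have "x \<in> open_segment y z"
  proof -
    obtain i where "w $ i \<noteq> 0" using w(3) by (auto simp: vec_eq_iff)
    hence "y $ i \<noteq> z $ i" using d(1) by (simp add: y_def z_def)
    hence "y \<noteq> z" by auto
    moreover have "x = (1 - 1/2) *\<^sub>R y + (1/2) *\<^sub>R z"
      by (simp add: y_def z_def vec_eq_iff algebra_simps)
    ultimately show ?thesis unfolding in_segment by (intro conjI exI[of _ "1/2"]) auto
  qed
  ultimately show False using ext by (auto simp: extreme_point_of_def)
qed

lemma sum_neq_0_if_sign_definite:
  assumes "sign_definite x" "x \<noteq> 0"
  shows "(\<Sum>i\<in>UNIV. x $ i) \<noteq> 0"
proof -
  obtain j where j: "x $ j \<noteq> 0" using assms(2) by (auto simp: vec_eq_iff)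
  from assms(1) consider "\<forall>i. 0 \<le> x $ i" | "\<forall>i. x $ i \<le> 0"
    unfolding sign_definite_def by blast
  thus ?thesis
  proof cases
    case 1
    hence "0 < (\<Sum>i\<in>UNIV. x $ i)" using j by (intro sum_pos2[of _ j]) (auto simp: order.order_iff_strict)
    thus ?thesis by simp
  next
    case 2
    hence "0 < (\<Sum>i\<in>UNIV. - x $ i)" using j by (intro sum_pos2[of _ j]) (auto simp: order.order_iff_strict)
    thus ?thesis by (simp add: sum_negf)
  qed
qed

lemma scaleR_inverse_sum_in_std_simplex:
  assumes "sign_definite x" "x \<noteq> 0"
  shows "(1 / (\<Sum>i\<in>UNIV. x $ i)) *\<^sub>R x \<in> std_simplex"
proof -
  have s: "(\<Sum>i\<in>UNIV. x $ i) \<noteq> 0" by (rule sum_neq_0_if_sign_definite[OF assms])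
  have "0 \<le> x $ i / (\<Sum>j\<in>UNIV. x $ j)" for i
    using assms(1) unfolding sign_definite_def
    by (auto intro: divide_nonneg_nonneg divide_nonpos_nonpos sum_nonneg sum_nonpos)
  thus ?thesis using s by (simp add: std_simplex_def sum_divide_distrib[symmetric])
qed

lemma eq_scaleR_inverse_sum_if_sum_eq_1:
  assumes "y = c *\<^sub>R x" "(\<Sum>i\<in>UNIV. y $ i) = 1"
  shows "y = (1 / (\<Sum>i\<in>UNIV. x $ i)) *\<^sub>R x"
proof -
  have "c * (\<Sum>i\<in>UNIV. x $ i) = 1" using assms by (simp add: sum_distrib_left)
  moreover from this have "(\<Sum>i\<in>UNIV. x $ i) \<noteq> 0" by auto
  ultimately have "c = 1 / (\<Sum>i\<in>UNIV. x $ i)" by (simp add: eq_divide_eq)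
  thus ?thesis using assms(1) by simp
qed

lemma column_in_span_columns: "column j A \<in> span (columns A)"
  by (auto simp: columns_def intro: span_base)

lemma col_col_normalize:
  fixes A :: "real^'n^'n"
  assumes "\<And>j. (\<Sum>r\<in>UNIV. A $ r $ j) \<noteq> 0"
  shows "col (col_normalize A) = col A"
proof -
  have column_eq: "column j (col_normalize A) = (1 / (\<Sum>r\<in>UNIV. A $ r $ j)) *\<^sub>R column j A" for j
    by (simp add: column_def col_normalize_def vec_eq_iff)
  have "column j A = (\<Sum>r\<in>UNIV. A $ r $ j) *\<^sub>R column j (col_normalize A)" for j
    using assms[of j] by (simp add: column_eq)
  hence "columns A \<subseteq> span (columns (col_normalize A))"
    by (auto simp: columns_def[of A] intro: span_scale column_in_span_columns)
  moreover have "columns (col_normalize A) \<subseteq> span (columns A)"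
    by (auto simp: columns_def[of "col_normalize A"] column_eq intro: span_scale column_in_span_columns)
  ultimately show ?thesis unfolding col_def by (simp add: span_eq)
qed

section \<open>Quadratic polynomials evaluated at the nodes\<close>

definition quad_space :: "('n::finite \<Rightarrow> real) \<Rightarrow> (real^'n) set" where
  "quad_space a = span {\<chi> i. 1, \<chi> i. a i, \<chi> i. a i ^ 2}"

definition quad_roots_vec :: "('n::finite \<Rightarrow> real) \<Rightarrow> 'n \<Rightarrow> 'n \<Rightarrow> real^'n" where
  "quad_roots_vec a p q = (\<chi> i. (a i - a p) * (a i - a q))"

lemma mem_quad_space_iff:
  "x \<in> quad_space a \<longleftrightarrow> (\<exists>c0 c1 c2. x = (\<chi> i. c0 + c1 * a i + c2 * a i ^ 2))"
proof -
  have "x \<in> quad_space a \<longleftrightarrow>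
      (\<exists>c0 c1 c2. x = c0 *\<^sub>R (\<chi> i. 1) + c1 *\<^sub>R (\<chi> i. a i) + c2 *\<^sub>R (\<chi> i. a i ^ 2))"
    unfolding quad_space_def span_insert span_singleton
    by (auto simp: algebra_simps)
  thus ?thesis by (simp add: vec_eq_iff)
qed

lemma quadratic_eq_0_if_three_roots:
  fixes x y z c0 c1 c2 :: real
  assumes "x \<noteq> y" "x \<noteq> z" "y \<noteq> z"
    and "c0 + c1 * x + c2 * x^2 = 0" "c0 + c1 * y + c2 * y^2 = 0" "c0 + c1 * z + c2 * z^2 = 0"
  shows "c0 = 0 \<and> c1 = 0 \<and> c2 = 0"
proof -
  have "(c1 + c2 * (x + y)) * (x - y) = 0" using assms(4,5) by (simp add: algebra_simps power2_eq_square)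
  hence xy: "c1 + c2 * (x + y) = 0" using assms(1) by simp
  have "(c1 + c2 * (x + z)) * (x - z) = 0" using assms(4,6) by (simp add: algebra_simps power2_eq_square)
  hence xz: "c1 + c2 * (x + z) = 0" using assms(2) by simp
  have "c2 * (y - z) = (c1 + c2 * (x + y)) - (c1 + c2 * (x + z))" by (simp add: algebra_simps)
  hence "c2 * (y - z) = 0" using xy xz by simp
  hence "c2 = 0" using assms(3) by simp
  thus ?thesis using xy assms(4) by simp
qed

lemma obtain_three_distinct:
  assumes "3 \<le> CARD('n)"
  obtains i j k :: "'n::finite" where "i \<noteq> j" "i \<noteq> k" "j \<noteq> k"
proof -
  obtain T :: "'n set" where "card T = 3" using obtain_subset_with_card_n[OF assms] by metis
  thus ?thesis using that by (auto simp: card_3_iff)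
qed

lemma quad_vec_eq_0_iff:
  fixes a :: "'n::finite \<Rightarrow> real"
  assumes "inj a" "3 \<le> CARD('n)"
  shows "(\<chi> i. c0 + c1 * a i + c2 * a i ^ 2) = 0 \<longleftrightarrow> c0 = 0 \<and> c1 = 0 \<and> c2 = 0"
proof
  assume "(\<chi> i. c0 + c1 * a i + c2 * a i ^ 2) = 0"
  hence roots: "c0 + c1 * a i + c2 * a i ^ 2 = 0" for i by (simp add: vec_eq_iff)
  obtain i j k :: 'n where "i \<noteq> j" "i \<noteq> k" "j \<noteq> k" using obtain_three_distinct[OF assms(2)] .
  hence "a i \<noteq> a j" "a i \<noteq> a k" "a j \<noteq> a k" using assms(1) by (auto dest: injD)
  thus "c0 = 0 \<and> c1 = 0 \<and> c2 = 0" using quadratic_eq_0_if_three_roots roots by blast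
qed (simp add: vec_eq_iff)

lemma dim_quad_space:
  fixes a :: "'n::finite \<Rightarrow> real"
  assumes "inj a" "3 \<le> CARD('n)"
  shows "dim (quad_space a) = 3"
proof -
  let ?one = "(\<chi> i. 1) :: real^'n" and ?lin = "\<chi> i. a i" and ?sq = "\<chi> i. a i ^ 2"
  have comb: "c0 *\<^sub>R ?one + c1 *\<^sub>R ?lin + c2 *\<^sub>R ?sq = 0 \<longleftrightarrow> c0 = 0 \<and> c1 = 0 \<and> c2 = 0" for c0 c1 c2
    using quad_vec_eq_0_iff[OF assms, of c0 c1 c2] by (simp add: vec_eq_iff)
  have distinct: "?one \<noteq> ?lin" "?one \<noteq> ?sq" "?lin \<noteq> ?sq"
    using comb[of 1 "-1" 0] comb[of 1 0 "-1"] comb[of 0 1 "-1"] by (auto simp: algebra_simps)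
  have "independent {?one, ?lin, ?sq}"
  proof
    assume "dependent {?one, ?lin, ?sq}"
    then obtain u where u: "\<exists>v\<in>{?one, ?lin, ?sq}. u v \<noteq> 0" "(\<Sum>v\<in>{?one, ?lin, ?sq}. u v *\<^sub>R v) = 0"
      using dependent_finite[of "{?one, ?lin, ?sq}"] by auto
    have "u ?one *\<^sub>R ?one + u ?lin *\<^sub>R ?lin + u ?sq *\<^sub>R ?sq = 0"
      using u(2) distinct by (simp add: add.assoc)
    thus False using u(1) comb by auto
  qed
  hence "dim (quad_space a) = card {?one, ?lin, ?sq}"
    unfolding quad_space_def by (simp add: dim_span dim_eq_card_independent)
  thus ?thesis using distinct by simp
qed

lemma subspace_quad_space: "subspace (quad_space a)"
  unfolding quad_space_def by (rule subspace_span)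

lemma const_in_quad_space: "(\<chi> i. 1) \<in> quad_space a"
  by (simp add: quad_space_def span_base)

lemma quad_roots_vec_in_quad_space: "quad_roots_vec a p q \<in> quad_space a"
  unfolding mem_quad_space_iff quad_roots_vec_def
  by (rule exI[of _ "a p * a q"], rule exI[of _ "- (a p + a q)"], rule exI[of _ 1])
     (simp add: vec_eq_iff algebra_simps power2_eq_square)

lemma quad_roots_vec_commute: "quad_roots_vec a p q = quad_roots_vec a q p"
  by (simp add: quad_roots_vec_def mult.commute)

lemma quad_roots_vec_eq_0_iff:
  assumes "inj a"
  shows "quad_roots_vec a p q $ i = 0 \<longleftrightarrow> i = p \<or> i = q"
  using assms by (auto simp: quad_roots_vec_def dest: injD)

lemma quad_roots_vec_neq_0:
  fixes a :: "'n::finite \<Rightarrow> real"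
  assumes "inj a" "3 \<le> CARD('n)"
  shows "quad_roots_vec a p q \<noteq> 0"
proof -
  obtain i j k :: 'n where "i \<noteq> j" "i \<noteq> k" "j \<noteq> k" using obtain_three_distinct[OF assms(2)] .
  then obtain r where "r \<noteq> p" "r \<noteq> q" by metis
  hence "quad_roots_vec a p q $ r \<noteq> 0" using quad_roots_vec_eq_0_iff[OF assms(1)] by blast
  thus ?thesis by auto
qed

lemma quad_space_vanishing_at_two:
  assumes "inj a" "p \<noteq> q" "x \<in> quad_space a" "x $ p = 0" "x $ q = 0"
  shows "\<exists>c. x = c *\<^sub>R quad_roots_vec a p q"
proof -
  obtain c0 c1 c2 where x: "x = (\<chi> i. c0 + c1 * a i + c2 * a i ^ 2)"
    using assms(3) by (auto simp: mem_quad_space_iff)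
  define \<alpha> where "\<alpha> = c0 - c2 * a p * a q"
  define \<beta> where "\<beta> = c1 + c2 * (a p + a q)"
  \<comment> \<open>\<open>\<alpha> + \<beta> * t\<close> is the remainder of the division by \<open>(t - a p) * (t - a q)\<close>\<close>
  have div: "c0 + c1 * t + c2 * t ^ 2 = c2 * ((t - a p) * (t - a q)) + (\<alpha> + \<beta> * t)" for t
    by (simp add: \<alpha>_def \<beta>_def algebra_simps power2_eq_square)
  have p: "\<alpha> + \<beta> * a p = 0" and q: "\<alpha> + \<beta> * a q = 0"
    using div[of "a p"] div[of "a q"] assms(4,5) x by simp_all
  have "\<beta> * (a p - a q) = (\<alpha> + \<beta> * a p) - (\<alpha> + \<beta> * a q)" by (simp add: algebra_simps)
  hence "\<beta> * (a p - a q) = 0" using p q by simp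
  moreover have "a p \<noteq> a q" using assms(1,2) by (auto dest: injD)
  ultimately have "\<beta> = 0" by simp
  hence "\<alpha> + \<beta> * t = 0" for t using p by simp
  hence "x = c2 *\<^sub>R quad_roots_vec a p q"
    by (simp add: x quad_roots_vec_def vec_eq_iff div)
  thus ?thesis by blast
qed

text \<open>With \<open>s\<^sub>1 = \<Sum>i. a i - a p\<close> and \<open>s\<^sub>2 = \<Sum>i. (a i - a p) * a i\<close>, the quadratic
  \<open>(t - a p) * (s\<^sub>1 * t - s\<^sub>2)\<close> has coordinate sum \<open>s\<^sub>1 * s\<^sub>2 - s\<^sub>2 * s\<^sub>1 = 0\<close>; it is nonzero
  because \<open>s\<^sub>2 - a p * s\<^sub>1 = \<Sum>i. (a i - a p)\<^sup>2 > 0\<close>.\<close>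
lemma exists_quad_space_sum_0_vanishing_at:
  fixes a :: "'n::finite \<Rightarrow> real"
  assumes "inj a" "3 \<le> CARD('n)"
  shows "\<exists>w \<in> quad_space a. (\<Sum>i\<in>UNIV. w $ i) = 0 \<and> w \<noteq> 0 \<and> w $ p = 0"
proof -
  define s1 where "s1 = (\<Sum>i\<in>UNIV. a i - a p)"
  define s2 where "s2 = (\<Sum>i\<in>UNIV. (a i - a p) * a i)"
  define w where "w = (\<chi> i. (a i - a p) * (s1 * a i - s2))"
  have w_quad: "w = (\<chi> i. a p * s2 + (- (s2 + a p * s1)) * a i + s1 * a i ^ 2)"
    by (simp add: w_def vec_eq_iff algebra_simps power2_eq_square)
  have "(\<Sum>i\<in>UNIV. w $ i) = (\<Sum>i\<in>UNIV. s1 * ((a i - a p) * a i) - s2 * (a i - a p))"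
    by (simp add: w_def algebra_simps)
  also have "\<dots> = s1 * s2 - s2 * s1"
    by (simp only: sum_subtractf sum_distrib_left[symmetric] s1_def s2_def)
  finally have "(\<Sum>i\<in>UNIV. w $ i) = 0" by simp
  moreover have "w \<noteq> 0"
  proof
    assume "w = 0"
    hence "s1 = 0" "s2 = 0" using quad_vec_eq_0_iff[OF assms] by (auto simp: w_quad)
    moreover obtain i j k :: 'n where "i \<noteq> j" "i \<noteq> k" "j \<noteq> k" using obtain_three_distinct[OF assms(2)] .
    then obtain r where "r \<noteq> p" by metis
    hence "0 < (\<Sum>i\<in>UNIV. (a i - a p)\<^sup>2)"
      using assms(1) by (intro sum_pos2[of _ r]) (auto dest: injD)
    moreover have "(\<Sum>i\<in>UNIV. (a i - a p)\<^sup>2) = (\<Sum>i\<in>UNIV. (a i - a p) * a i - a p * (a i - a p))"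
      by (simp add: power2_eq_square algebra_simps)
    hence "(\<Sum>i\<in>UNIV. (a i - a p)\<^sup>2) = s2 - a p * s1"
      by (simp only: sum_subtractf sum_distrib_left[symmetric] s1_def s2_def)
    ultimately show False by simp
  qed
  moreover have "w \<in> quad_space a" unfolding mem_quad_space_iff w_quad by blast
  moreover have "w $ p = 0" by (simp add: w_def)
  ultimately show ?thesis by blast
qed

lemma col_sqdist_mat:
  fixes a :: "'n::finite \<Rightarrow> real"
  assumes "inj a" "3 \<le> CARD('n)"
  shows "col (sqdist_mat a) = quad_space a"
proof -
  let ?S = "span (columns (sqdist_mat a))"
  have column: "column j (sqdist_mat a) = quad_roots_vec a j j" for j
    by (simp add: column_def sqdist_mat_def quad_roots_vec_def vec_eq_iff power2_eq_square)
  have "?S \<subseteq> quad_space a"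
    by (rule span_minimal[OF _ subspace_quad_space])
       (auto simp: columns_def column quad_roots_vec_in_quad_space)
  moreover have "quad_space a \<subseteq> ?S"
  proof -
    have sq: "(\<chi> i. (a i - a j)\<^sup>2) \<in> ?S" for j
      using column_in_span_columns[of j "sqdist_mat a"]
      by (simp add: column_def sqdist_mat_def)
    obtain p q r :: 'n where "p \<noteq> q" "p \<noteq> r" "q \<noteq> r" using obtain_three_distinct[OF assms(2)] .
    hence ne: "a p \<noteq> a q" "a p \<noteq> a r" "a q \<noteq> a r" using assms(1) by (auto dest: injD)
    \<comment> \<open>divided differences of the columns give affine functions, then constants\<close>
    define aff where "aff y = (\<chi> i. (a p + y) - 2 * a i)" for y
    have aff: "aff (a j) \<in> ?S" if "a p \<noteq> a j" for j
    proof -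
      have "(a i - a p)\<^sup>2 - (a i - a j)\<^sup>2 = (a p - a j) * ((a p + a j) - 2 * a i)" for i
        by (simp add: power2_eq_square algebra_simps)
      hence "aff (a j) = (1 / (a p - a j)) *\<^sub>R ((\<chi> i. (a i - a p)\<^sup>2) - (\<chi> i. (a i - a j)\<^sup>2))"
        using that by (simp add: aff_def vec_eq_iff)
      thus ?thesis using sq by (simp add: span_diff span_scale)
    qed
    have "(\<chi> i. 1) = (1 / (a q - a r)) *\<^sub>R (aff (a q) - aff (a r))"
      using ne by (simp add: aff_def vec_eq_iff)
    hence one: "(\<chi> i. 1) \<in> ?S" using aff ne by (simp add: span_diff span_scale)
    have "(\<chi> i. a i) = (1/2) *\<^sub>R ((a p + a q) *\<^sub>R (\<chi> i. 1) - aff (a q))"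
      by (simp add: aff_def vec_eq_iff field_simps)
    hence lin: "(\<chi> i. a i) \<in> ?S" using one aff ne by (simp add: span_diff span_scale)
    have "(\<chi> i. a i ^ 2) = (\<chi> i. (a i - a p)\<^sup>2) - (a p)\<^sup>2 *\<^sub>R (\<chi> i. 1) + (2 * a p) *\<^sub>R (\<chi> i. a i)"
      by (simp add: vec_eq_iff field_simps power2_eq_square)
    hence "(\<chi> i. a i ^ 2) \<in> ?S" using one lin sq by (simp add: span_add span_diff span_scale)
    with one lin show ?thesis unfolding quad_space_def by (intro span_minimal) auto
  qed
  ultimately show ?thesis unfolding col_def by blast
qed

lemma sum_sqdist_mat_column_pos:
  fixes a :: "'n::finite \<Rightarrow> real"
  assumes "inj a" "2 \<le> CARD('n)"
  shows "0 < (\<Sum>r\<in>UNIV. sqdist_mat a $ r $ j)"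
proof -
  have "UNIV \<noteq> {j}"
  proof
    assume "UNIV = {j}"
    hence "CARD('n) = card {j}" by (simp only:)
    thus False using assms(2) by simp
  qed
  then obtain r where "r \<noteq> j" by blast
  thus ?thesis using assms(1) by (intro sum_pos2[of _ r]) (auto simp: sqdist_mat_def dest: injD)
qed

section \<open>Cyclically consecutive nodes\<close>

lemma u_vec_eq_quad_roots_vec:
  fixes a :: "'n::finite \<Rightarrow> real"
  shows "u_vec a e k = quad_roots_vec a (e k) (e ((k + 1) mod CARD('n)))"
  by (simp add: u_vec_def quad_roots_vec_def)

locale ordered_nodes =
  fixes a :: "'n::finite \<Rightarrow> real" and e :: "nat \<Rightarrow> 'n"
  assumes card_ge_3: "3 \<le> CARD('n)"
    and bij_e: "bij_betw e {..<CARD('n)} UNIV"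
    and a_e_strict_mono: "\<And>i j. i < j \<Longrightarrow> j < CARD('n) \<Longrightarrow> a (e i) < a (e j)"
begin

lemma obtain_index:
  obtains m where "m < CARD('n)" "i = e m"
  using bij_e by (metis bij_betw_def imageE lessThan_iff UNIV_I)

lemma e_eq_iff: "j < CARD('n) \<Longrightarrow> m < CARD('n) \<Longrightarrow> e j = e m \<longleftrightarrow> j = m"
  using bij_betw_imp_inj_on[OF bij_e] by (auto simp: inj_on_def)

lemma inj_a: "inj a"
proof (rule injI)
  fix i i' assume eq: "a i = a i'"
  obtain j l where "j < CARD('n)" "i = e j" "l < CARD('n)" "i' = e l" by (metis obtain_index)
  moreover from this have "j = l"
    using eq a_e_strict_mono[of j l] a_e_strict_mono[of l j] by (metis linorder_neqE_nat order_less_irrefl)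
  ultimately show "i = i'" by simp
qed

lemma quad_roots_vec_neg_between:
  "j < m \<Longrightarrow> m < l \<Longrightarrow> l < CARD('n) \<Longrightarrow> quad_roots_vec a (e j) (e l) $ e m < 0"
  using a_e_strict_mono[of j m] a_e_strict_mono[of m l]
  by (simp add: quad_roots_vec_def mult_pos_neg)

lemma quad_roots_vec_pos_outside:
  assumes "j < l" "l < CARD('n)" "m < CARD('n)" "m < j \<or> l < m"
  shows "0 < quad_roots_vec a (e j) (e l) $ e m"
  using assms a_e_strict_mono[of m j] a_e_strict_mono[of m l]
    a_e_strict_mono[of j m] a_e_strict_mono[of l m]
  by (auto simp: quad_roots_vec_def mult_neg_neg)

lemma u_vec_Suc: "Suc k < CARD('n) \<Longrightarrow> u_vec a e k = quad_roots_vec a (e k) (e (Suc k))"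
  by (simp add: u_vec_eq_quad_roots_vec)

lemma u_vec_last: "u_vec a e (CARD('n) - 1) = quad_roots_vec a (e 0) (e (CARD('n) - 1))"
  using card_ge_3 by (simp add: u_vec_eq_quad_roots_vec quad_roots_vec_commute)

lemma sign_definite_u_vec:
  assumes "k < CARD('n)"
  shows "sign_definite (u_vec a e k)"
proof (cases "Suc k < CARD('n)")
  case True
  have "0 \<le> u_vec a e k $ i" for i
  proof -
    obtain m where m: "m < CARD('n)" "i = e m" by (rule obtain_index)
    show ?thesis
    proof (cases "m = k \<or> m = Suc k")
      case True thus ?thesis using m by (auto simp: u_vec_Suc[OF \<open>Suc k < CARD('n)\<close>] quad_roots_vec_def)
    next
      case False
      hence "m < k \<or> Suc k < m" by auto
      thus ?thesis using quad_roots_vec_pos_outside[of k "Suc k" m] True m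
        by (simp add: u_vec_Suc less_imp_le)
    qed
  qed
  thus ?thesis by (simp add: sign_definite_def)
next
  case False
  hence k: "k = CARD('n) - 1" using assms by simp
  have "u_vec a e k $ i \<le> 0" for i
  proof -
    obtain m where m: "m < CARD('n)" "i = e m" by (rule obtain_index)
    show ?thesis
    proof (cases "m = 0 \<or> m = CARD('n) - 1")
      case True thus ?thesis using m unfolding k u_vec_last by (auto simp: quad_roots_vec_def)
    next
      case False
      thus ?thesis using quad_roots_vec_neg_between[of 0 m "CARD('n) - 1"] m
        unfolding k u_vec_last by fastforce
    qed
  qed
  thus ?thesis by (simp add: sign_definite_def)
qed

lemma u_vec_if_sign_definite:
  assumes jl: "j < l" "l < CARD('n)" and sd: "sign_definite (quad_roots_vec a (e j) (e l))"
  shows "\<exists>k < CARD('n). quad_roots_vec a (e j) (e l) = u_vec a e k"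
proof -
  have "l = Suc j \<or> (j = 0 \<and> l = CARD('n) - 1)"
  proof (rule ccontr)
    assume not_adjacent: "\<not> ?thesis"
    hence "quad_roots_vec a (e j) (e l) $ e (Suc j) < 0"
      using jl by (intro quad_roots_vec_neg_between) auto
    moreover obtain m where "m < CARD('n)" "m < j \<or> l < m"
    proof (cases "j = 0")
      case True
      thus ?thesis using not_adjacent jl that[of "CARD('n) - 1"] by auto
    next
      case False
      thus ?thesis using jl that[of 0] by auto
    qed
    hence "0 < quad_roots_vec a (e j) (e l) $ e m"
      using jl by (intro quad_roots_vec_pos_outside)
    ultimately show False using sd unfolding sign_definite_def by (metis not_le)
  qed
  thus ?thesis
  proof
    assume "l = Suc j"
    thus ?thesis using jl u_vec_Suc[of j] by (intro exI[of _ j]) auto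
  next
    assume "j = 0 \<and> l = CARD('n) - 1"
    thus ?thesis using u_vec_last card_ge_3 by (intro exI[of _ "CARD('n) - 1"]) auto
  qed
qed

lemma e_succ_neq: "k < CARD('n) \<Longrightarrow> e ((k + 1) mod CARD('n)) \<noteq> e k"
  using card_ge_3 by (subst e_eq_iff) (auto simp: mod_if)

lemma u_vec_neq_0: "u_vec a e k \<noteq> 0"
  unfolding u_vec_eq_quad_roots_vec by (rule quad_roots_vec_neq_0[OF inj_a card_ge_3])

lemma v_vec_in_std_simplex_Int_quad_space:
  assumes "k < CARD('n)"
  shows "v_vec a e k \<in> std_simplex \<inter> quad_space a"
  using scaleR_inverse_sum_in_std_simplex[OF sign_definite_u_vec[OF assms] u_vec_neq_0]
    subspace_mul[OF subspace_quad_space quad_roots_vec_in_quad_space]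
  by (simp add: v_vec_def u_vec_eq_quad_roots_vec)

lemma v_vec_eq_0_iff:
  assumes "k < CARD('n)"
  shows "v_vec a e k $ i = 0 \<longleftrightarrow> i = e k \<or> i = e ((k + 1) mod CARD('n))"
  using sum_neq_0_if_sign_definite[OF sign_definite_u_vec[OF assms] u_vec_neq_0]
  by (simp add: v_vec_def u_vec_eq_quad_roots_vec quad_roots_vec_eq_0_iff[OF inj_a])

lemma extreme_point_v_vec:
  assumes k: "k < CARD('n)"
  shows "v_vec a e k extreme_point_of (std_simplex \<inter> quad_space a)"
proof (rule extreme_point_of_std_simplex_Int_if_unique[OF v_vec_in_std_simplex_Int_quad_space[OF k]])
  fix y assume y: "y \<in> std_simplex \<inter> quad_space a"
    and supp: "\<And>i. v_vec a e k $ i = 0 \<Longrightarrow> y $ i = 0"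
  obtain c where "y = c *\<^sub>R u_vec a e k"
    using quad_space_vanishing_at_two[OF inj_a e_succ_neq[OF k, symmetric]] y supp
      v_vec_eq_0_iff[OF k] by (auto simp: u_vec_eq_quad_roots_vec)
  moreover have "(\<Sum>i\<in>UNIV. y $ i) = 1" using y by (simp add: std_simplex_def)
  ultimately show "y = v_vec a e k"
    unfolding v_vec_def by (rule eq_scaleR_inverse_sum_if_sum_eq_1)
qed

lemma extreme_point_imp_v_vec:
  assumes ext: "x extreme_point_of (std_simplex \<inter> quad_space a)"
  shows "\<exists>k < CARD('n). x = v_vec a e k"
proof -
  have x: "x \<in> std_simplex \<inter> quad_space a" using ext by (simp add: extreme_point_of_def)
  have two_zeros: "\<exists>j l. j < l \<and> l < CARD('n) \<and> x $ e j = 0 \<and> x $ e l = 0"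
  proof (rule ccontr)
    assume "\<not> ?thesis"
    hence "\<exists>p. \<forall>i. x $ i = 0 \<longrightarrow> i = p"
      by (metis obtain_index linorder_neqE_nat)
    then obtain p where p: "\<And>i. x $ i = 0 \<Longrightarrow> i = p" by blast
    obtain w where "w \<in> quad_space a" "(\<Sum>i\<in>UNIV. w $ i) = 0" "w \<noteq> 0" "w $ p = 0"
      using exists_quad_space_sum_0_vanishing_at[OF inj_a card_ge_3] by blast
    hence "\<not> x extreme_point_of (std_simplex \<inter> quad_space a)"
      using p by (intro not_extreme_point_of_std_simplex_Int[OF subspace_quad_space x]) auto
    thus False using ext by contradiction
  qed
  then obtain j l where jl: "j < l" "l < CARD('n)" and zeros: "x $ e j = 0" "x $ e l = 0" by blast
  have "e j \<noteq> e l" using jl e_eq_iff[of j l] by simp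
  then obtain c where c: "x = c *\<^sub>R quad_roots_vec a (e j) (e l)"
    using quad_space_vanishing_at_two[OF inj_a _ _ zeros] x by blast
  have sum_x: "(\<Sum>i\<in>UNIV. x $ i) = 1" using x by (simp add: std_simplex_def)
  hence "c \<noteq> 0" using c by auto
  moreover have "0 \<le> c * quad_roots_vec a (e j) (e l) $ i" for i
    using x c by (auto simp: std_simplex_def)
  ultimately have "sign_definite (quad_roots_vec a (e j) (e l))"
    unfolding sign_definite_def by (metis zero_le_mult_iff linorder_neqE_linordered_idom not_less)
  then obtain k where k: "k < CARD('n)" "quad_roots_vec a (e j) (e l) = u_vec a e k"
    using u_vec_if_sign_definite[OF jl] by blast
  have "x = v_vec a e k"
    unfolding v_vec_def using c k(2) sum_x by (intro eq_scaleR_inverse_sum_if_sum_eq_1) auto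
  thus ?thesis using k(1) by blast
qed

lemma extreme_points_std_simplex_Int_quad_space:
  "{x. x extreme_point_of (std_simplex \<inter> quad_space a)} = v_vec a e ` {..<CARD('n)}"
  using extreme_point_imp_v_vec extreme_point_v_vec by auto

lemma inj_on_v_vec: "inj_on (v_vec a e) {..<CARD('n)}"
proof (rule inj_onI)
  fix k l assume "k \<in> {..<CARD('n)}" "l \<in> {..<CARD('n)}" and eq: "v_vec a e k = v_vec a e l"
  hence k: "k < CARD('n)" and l: "l < CARD('n)" by auto
  let ?succ = "\<lambda>k. (k + 1) mod CARD('n)"
  have succ_lt: "?succ k < CARD('n)" "?succ l < CARD('n)" using card_ge_3 by auto
  have "e k = e l \<or> e k = e (?succ l)" "e l = e k \<or> e l = e (?succ k)"
    using eq v_vec_eq_0_iff[OF k] v_vec_eq_0_iff[OF l] by metis+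
  hence "k = l \<or> (k = ?succ l \<and> l = ?succ k)"
    using e_eq_iff k l succ_lt by auto
  \<comment> \<open>\<open>k = l + 1 = k + 2 (mod n)\<close> is impossible for \<open>n \<ge> 3\<close>\<close>
  thus "k = l" using k l card_ge_3 by (auto simp: mod_if split: if_splits)
qed

end

theorem mainTheorem7:
  fixes a :: "'n::finite \<Rightarrow> real"
    and e :: "nat \<Rightarrow> 'n"
  assumes n3: "CARD('n) \<ge> 3"
    and e_bij: "bij_betw e {..<CARD('n)} UNIV"
    and incr: "\<And>i j. i < j \<Longrightarrow> j < CARD('n) \<Longrightarrow> a (e i) < a (e j)"
  shows "rank (sqdist_mat a) = 3
     \<and> (\<forall>k < CARD('n). u_vec a e k \<in> col (sqdist_mat a))
     \<and> is_polygon_with_vertices (P_out (col_normalize (sqdist_mat a))) (v_vec a e ` {..<CARD('n)})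
     \<and> card (v_vec a e ` {..<CARD('n)}) = CARD('n)"
proof -
  interpret ordered_nodes a e using assms by unfold_locales
  have col_D: "col (sqdist_mat a) = quad_space a"
    by (rule col_sqdist_mat[OF inj_a card_ge_3])
  have "(\<Sum>r\<in>UNIV. sqdist_mat a $ r $ j) \<noteq> 0" for j
    using sum_sqdist_mat_column_pos[OF inj_a, of j] card_ge_3 by simp
  hence "col (col_normalize (sqdist_mat a)) = quad_space a"
    using col_col_normalize col_D by metis
  hence P_out: "P_out (col_normalize (sqdist_mat a)) = std_simplex \<inter> quad_space a"
    by (simp add: P_out_def)
  have "rank (sqdist_mat a) = dim (col (sqdist_mat a))"
    by (simp add: column_rank_def col_def dim_span)
  hence "rank (sqdist_mat a) = 3" by (simp add: col_D dim_quad_space[OF inj_a card_ge_3])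
  moreover have "\<forall>k < CARD('n). u_vec a e k \<in> col (sqdist_mat a)"
    by (simp add: col_D u_vec_eq_quad_roots_vec quad_roots_vec_in_quad_space)
  moreover have "is_polygon_with_vertices (P_out (col_normalize (sqdist_mat a))) (v_vec a e ` {..<CARD('n)})"
    unfolding is_polygon_with_vertices_def P_out extreme_points_std_simplex_Int_quad_space
    using polytope_std_simplex_Int_subspace[OF subspace_quad_space[of a]]
      aff_dim_std_simplex_Int_subspace[OF subspace_quad_space[of a] const_in_quad_space[of a]]
      dim_quad_space[OF inj_a card_ge_3]
    by simp
  moreover have "card (v_vec a e ` {..<CARD('n)}) = CARD('n)"
    using card_image[OF inj_on_v_vec] by simp
  ultimately show ?thesis by blast
qed

end
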